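(* For every integer $n\ge 0$, $$\sum_{\pi\in \mathcal I^C_{2n}(321)}q^{\mathrm{des}^+(\pi)}=\sum_{k\geq 0} \binom{n+1}{2k}q^k=\frac{(1+\sqrt{q})^{n+1}+(1-\sqrt{q})^{n+1}}{2}.$$
   Context: A permutation $\pi\in\mathcal S_m$ is centrosymmetric if $\pi(i)+\pi(m+1-i)=m+1$ for all $1\le i\le m$. $\mathcal I^C_m(321)$ denotes the set of centrosymmetric involutions $\pi\in\mathcal S_m$ (i.e. $\pi=\pi^{-1}$) that avoid the pattern $321$ (no indices $i<j<k$ with $\pi(i)>\pi(j)>\pi(k)$). A descent of $\pi\in\mathcal S_m$ is a position $i\in\{1,\dots,m-1\}$ with $\pi(i)>\pi(i+1)$; $\mathrm{Des}(\pi)$ is the set of descents. For $\pi\in\mathcal S_m$ with $n=\lfloor m/2\rfloor$, $\mathrm{Des}^+(\pi)=\mathrm{Des}(\pi)\cap\{1,\dots,n\}$ and $\mathrm{des}^+(\pi)=|\mathrm{Des}^+(\pi)|$. *)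

theory Defs
  imports "HOL-Combinatorics.Permutations" Complex_Main
begin

definition centrosymmetric :: "nat \<Rightarrow> (nat \<Rightarrow> nat) \<Rightarrow> bool" where
  "centrosymmetric m \<pi> \<longleftrightarrow> (\<forall>i\<in>{1..m}. \<pi> i + \<pi> (m + 1 - i) = m + 1)"

definition avoids321 :: "nat \<Rightarrow> (nat \<Rightarrow> nat) \<Rightarrow> bool" where
  "avoids321 m \<pi> \<longleftrightarrow>
     \<not> (\<exists>i j k. 1 \<le> i \<and> i < j \<and> j < k \<and> k \<le> m \<and> \<pi> i > \<pi> j \<and> \<pi> j > \<pi> k)"

definition centro_inv_321 :: "nat \<Rightarrow> (nat \<Rightarrow> nat) set" where
  "centro_inv_321 m = {\<pi>. \<pi> permutes {1..m} \<and> inv \<pi> = \<pi> \<and> centrosymmetric m \<pi> \<and> avoids321 m \<pi>}"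

definition Des :: "nat \<Rightarrow> (nat \<Rightarrow> nat) \<Rightarrow> nat set" where
  "Des m \<pi> = {i \<in> {1..m - 1}. \<pi> i > \<pi> (i + 1)}"

definition des_plus :: "nat \<Rightarrow> (nat \<Rightarrow> nat) \<Rightarrow> nat" where
  "des_plus m \<pi> = card (Des m \<pi> \<inter> {1..m div 2})"

end

theory Submission
  imports Defs "HOL-Library.Infinite_Set"
begin

text \<open>
  A 321-avoiding involution is a non-nesting arc diagram: its excedances are matched
  increasingly to its deficiencies and no arc passes over a fixed point. Hence it is
  determined by its excedance set, deficiencies being recovered from left to right by
  counting. For a centrosymmetric involution of \<open>[2n]\<close> the second half mirrors the first,
  so \<open>\<pi>\<close> is determined by \<open>S = {i \<le> n. i < \<pi> i}\<close>; conversely every \<open>S \<subseteq> [n]\<close> arises,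
  the closers of the first half being read off a lattice path with up-steps at \<open>S\<close>.
  A descent \<open>i \<le> n\<close> of \<open>\<pi>\<close> is exactly the right end of a maximal block of \<open>S\<close>, and counting
  subsets of \<open>[n]\<close> by their number of blocks gives
  \<open>((1 + \<surd>q)\<^sup>n\<^sup>+\<^sup>1 + (1 - \<surd>q)\<^sup>n\<^sup>+\<^sup>1) / 2 = \<Sum>\<^sub>k (n+1 choose 2k) q\<^sup>k\<close>.
\<close>

lemma strict_mono_on_inv_into:
  fixes f :: "'a::linorder \<Rightarrow> 'b::linorder"
  assumes "bij_betw f A B" "strict_mono_on A f"
  shows "strict_mono_on B (inv_into A f)"
proof (rule strict_mono_onI)
  fix x y assume xy: "x \<in> B" "y \<in> B" "x < y"
  have "inv_into A f x \<in> A" "inv_into A f y \<in> A"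
    using xy assms(1) by (auto simp: bij_betw_def inv_into_into)
  moreover have "f (inv_into A f x) < f (inv_into A f y)"
    using xy assms(1) by (simp add: bij_betw_inv_into_right)
  ultimately show "inv_into A f x < inv_into A f y"
    using strict_mono_on_less[OF assms(2)] by blast
qed

lemma ex_strict_mono_bij_betw:
  fixes A B :: "'a::wellorder set"
  assumes "finite A" "finite B" "card A = card B"
  obtains f where "bij_betw f A B" "strict_mono_on A f"
proof -
  obtain g where g: "bij_betw g {..<card A} A" "strict_mono_on {..<card A} g"
    using ex_bij_betw_strict_mono_card[OF assms(1)] .
  obtain h where h: "bij_betw h {..<card A} B" "strict_mono_on {..<card A} h"
    using ex_bij_betw_strict_mono_card[OF assms(2)] unfolding assms(3) .
  have g': "bij_betw (inv_into {..<card A} g) A {..<card A}"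
    "strict_mono_on A (inv_into {..<card A} g)"
    using g by (auto intro: bij_betw_inv_into strict_mono_on_inv_into)
  show thesis
  proof
    show "bij_betw (h \<circ> inv_into {..<card A} g) A B"
      using g'(1) h(1) by (rule bij_betw_trans)
    show "strict_mono_on A (h \<circ> inv_into {..<card A} g)"
    proof (rule strict_mono_onI)
      fix x y assume "x \<in> A" "y \<in> A" "x < y"
      moreover have "inv_into {..<card A} g x \<in> {..<card A}" "inv_into {..<card A} g y \<in> {..<card A}"
        using \<open>x \<in> A\<close> \<open>y \<in> A\<close> g'(1) by (auto simp: bij_betw_def)
      ultimately show "(h \<circ> inv_into {..<card A} g) x < (h \<circ> inv_into {..<card A} g) y"
        using strict_mono_onD[OF h(2)] strict_mono_onD[OF g'(2)] by simp
    qed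
  qed
qed

lemma strict_mono_bij_betw_image_less:
  fixes f :: "'a::linorder \<Rightarrow> 'b::linorder"
  assumes "bij_betw f A B" "strict_mono_on A f" "x \<in> A"
  shows "{b \<in> B. b < f x} = f ` {a \<in> A. a < x}"
  using assms by (auto simp: bij_betw_def strict_mono_on_less)

lemma card_less_strict_mono_bij_betw:
  fixes f :: "'a::linorder \<Rightarrow> 'b::linorder"
  assumes "bij_betw f A B" "strict_mono_on A f" "x \<in> A"
  shows "card {b \<in> B. b < f x} = card {a \<in> A. a < x}"
  unfolding strict_mono_bij_betw_image_less[OF assms]
  by (rule card_image) (use assms(1) in \<open>auto simp: bij_betw_def intro: inj_on_subset\<close>)

lemma strict_mono_bij_betw_unique:
  fixes f g :: "'a::linorder \<Rightarrow> 'b::linorder"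
  assumes "finite B"
    and "bij_betw f A B" "strict_mono_on A f"
    and "bij_betw g A B" "strict_mono_on A g"
    and "x \<in> A"
  shows "f x = g x"
proof -
  have not_less: False if "bij_betw f A B" "strict_mono_on A f" "bij_betw g A B" "strict_mono_on A g"
    "f x < g x" for f g :: "'a \<Rightarrow> 'b"
  proof -
    have "{b \<in> B. b < f x} \<subset> {b \<in> B. b < g x}"
      using that \<open>x \<in> A\<close> by (auto simp: bij_betw_def)
    then have "card {b \<in> B. b < f x} < card {b \<in> B. b < g x}"
      using \<open>finite B\<close> by (simp add: psubset_card_mono)
    then show False
      using card_less_strict_mono_bij_betw[OF that(1,2) \<open>x \<in> A\<close>]
        card_less_strict_mono_bij_betw[OF that(3,4) \<open>x \<in> A\<close>] by simp
  qed
  show ?thesis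
    using not_less[of f g] not_less[of g f] assms(2-5) by (cases "f x" "g x" rule: linorder_cases) auto
qed

definition excedances :: "nat \<Rightarrow> (nat \<Rightarrow> nat) \<Rightarrow> nat set" where
  "excedances m \<tau> = {i \<in> {1..m}. i < \<tau> i}"

definition deficiencies :: "nat \<Rightarrow> (nat \<Rightarrow> nat) \<Rightarrow> nat set" where
  "deficiencies m \<tau> = {i \<in> {1..m}. \<tau> i < i}"

locale involution321 =
  fixes m :: nat and \<tau> :: "nat \<Rightarrow> nat"
  assumes permutes: "\<tau> permutes {1..m}"
    and involutive: "\<tau> (\<tau> x) = x"
    and avoids: "avoids321 m \<tau>"
begin

lemma in_range: "x \<in> {1..m} \<Longrightarrow> \<tau> x \<in> {1..m}"
  using permutes_in_image[OF permutes] by simp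

lemma fixed_outside: "x \<notin> {1..m} \<Longrightarrow> \<tau> x = x"
  using permutes_not_in[OF permutes] .

lemma bounds_iff [simp]: "Suc 0 \<le> \<tau> x \<longleftrightarrow> Suc 0 \<le> x" "\<tau> x \<le> m \<longleftrightarrow> x \<le> m"
  using in_range[of x] fixed_outside[of x] by (cases "x \<in> {1..m}"; auto)+

lemma eq_iff: "\<tau> x = \<tau> y \<longleftrightarrow> x = y"
  by (metis involutive)

lemma not_321:
  assumes "1 \<le> i" "i < j" "j < k" "k \<le> m" "\<tau> j < \<tau> i" "\<tau> k < \<tau> j"
  shows False
  using avoids assms unfolding avoids321_def by blast

lemma strict_mono_on_excedances: "strict_mono_on (excedances m \<tau>) \<tau>"
proof (rule strict_mono_onI)
  fix i j assume i: "i \<in> excedances m \<tau>" and j: "j \<in> excedances m \<tau>" and "i < j"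
  show "\<tau> i < \<tau> j"
  proof (rule ccontr)
    assume "\<not> \<tau> i < \<tau> j"
    with \<open>i < j\<close> eq_iff have "\<tau> j < \<tau> i" by (metis linorder_neqE_nat less_irrefl)
    moreover have "\<tau> i \<le> m" using in_range i by (auto simp: excedances_def)
    ultimately show False \<comment> \<open>positions \<open>j < \<tau> j < \<tau> i\<close> carry the values \<open>\<tau> j > j > i\<close>\<close>
      using not_321[of j "\<tau> j" "\<tau> i"] i j \<open>i < j\<close> by (auto simp: excedances_def involutive)
  qed
qed

lemma bij_betw_excedances: "bij_betw \<tau> (excedances m \<tau>) (deficiencies m \<tau>)"
  by (rule bij_betw_byWitness[where f' = \<tau>])
     (auto simp: excedances_def deficiencies_def involutive)

lemma card_deficiencies_below_deficiency:
  assumes x: "x \<in> deficiencies m \<tau>"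
  shows "card {d \<in> deficiencies m \<tau>. d < x} < card {e \<in> excedances m \<tau>. e < x}"
proof -
  have "{d \<in> deficiencies m \<tau>. d \<le> x} = insert x {d \<in> deficiencies m \<tau>. d < x}"
    using x by auto
  then have "card {d \<in> deficiencies m \<tau>. d < x} < card {d \<in> deficiencies m \<tau>. d \<le> x}"
    by (simp add: deficiencies_def)
  also have "\<dots> \<le> card {e \<in> excedances m \<tau>. e < x}"
  proof (rule card_inj_on_le)
    show "inj_on \<tau> {d \<in> deficiencies m \<tau>. d \<le> x}"
      by (rule inj_onI) (simp add: eq_iff)
    show "\<tau> ` {d \<in> deficiencies m \<tau>. d \<le> x} \<subseteq> {e \<in> excedances m \<tau>. e < x}"
      by (auto simp: excedances_def deficiencies_def involutive)
  qed (simp add: excedances_def)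
  finally show ?thesis .
qed

text \<open>An arc \<open>e < \<tau> e\<close> passing over a fixed point \<open>x\<close> would give the pattern \<open>\<tau> e, x, e\<close>.\<close>

lemma card_excedances_below_fixed_point:
  assumes x: "x \<in> {1..m}" "\<tau> x = x"
  shows "card {e \<in> excedances m \<tau>. e < x} \<le> card {d \<in> deficiencies m \<tau>. d < x}"
proof (rule card_inj_on_le)
  show "inj_on \<tau> {e \<in> excedances m \<tau>. e < x}"
    by (rule inj_onI) (simp add: eq_iff)
  show "\<tau> ` {e \<in> excedances m \<tau>. e < x} \<subseteq> {d \<in> deficiencies m \<tau>. d < x}"
  proof
    fix y assume "y \<in> \<tau> ` {e \<in> excedances m \<tau>. e < x}"
    then obtain e where e: "e \<in> excedances m \<tau>" "e < x" "y = \<tau> e" by blast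
    have "\<tau> e \<noteq> x" using e x eq_iff by (metis less_irrefl)
    moreover have "\<not> x < \<tau> e"
      using not_321[of e x "\<tau> e"] e x in_range[of e] by (auto simp: excedances_def involutive)
    ultimately show "y \<in> {d \<in> deficiencies m \<tau>. d < x}"
      using e in_range[of e] by (auto simp: excedances_def deficiencies_def involutive)
  qed
qed (simp add: deficiencies_def)

lemma deficiency_iff_card_below:
  assumes "x \<in> {1..m}" "x \<notin> excedances m \<tau>"
  shows "x \<in> deficiencies m \<tau> \<longleftrightarrow>
    card {d \<in> deficiencies m \<tau>. d < x} < card {e \<in> excedances m \<tau>. e < x}"
proof
  assume "card {d \<in> deficiencies m \<tau>. d < x} < card {e \<in> excedances m \<tau>. e < x}"
  moreover have "x \<notin> deficiencies m \<tau> \<Longrightarrow> \<tau> x = x"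
    using assms by (auto simp: excedances_def deficiencies_def)
  ultimately show "x \<in> deficiencies m \<tau>"
    using card_excedances_below_fixed_point[OF assms(1)] by fastforce
qed (rule card_deficiencies_below_deficiency)

lemma descent_iff_excedances:
  assumes i: "1 \<le> i" "i < m"
  shows "\<tau> (i + 1) < \<tau> i \<longleftrightarrow> i \<in> excedances m \<tau> \<and> i + 1 \<notin> excedances m \<tau>"
proof
  assume desc: "\<tau> (i + 1) < \<tau> i"
  have "i < \<tau> i"
  proof (rule ccontr)
    assume "\<not> i < \<tau> i"
    define a where "a = \<tau> (i + 1)"
    have a: "a \<in> {1..m}" "\<tau> a = i + 1" "a < \<tau> i" "a < i + 1"
      using in_range[of "i + 1"] i desc \<open>\<not> i < \<tau> i\<close> by (auto simp: a_def involutive)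
    show False
    proof (cases "\<tau> i = i")
      case True
      then show False using not_321[of a i "i + 1"] a i unfolding a_def by (auto simp: involutive)
    next
      case False
      then have "\<tau> i \<in> excedances m \<tau>" "a \<in> excedances m \<tau>"
        using \<open>\<not> i < \<tau> i\<close> a in_range[of i] i by (auto simp: excedances_def involutive)
      then have "\<tau> a < \<tau> (\<tau> i)"
        using strict_mono_onD[OF strict_mono_on_excedances] \<open>a < \<tau> i\<close> by blast
      then show False using a \<open>\<not> i < \<tau> i\<close> by (simp add: involutive)
    qed
  qed
  moreover have "i + 1 \<notin> excedances m \<tau>"
    using strict_mono_onD[OF strict_mono_on_excedances, of i "i + 1"] \<open>i < \<tau> i\<close> i desc
    by (auto simp: excedances_def)
  ultimately show "i \<in> excedances m \<tau> \<and> i + 1 \<notin> excedances m \<tau>"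
    using i by (simp add: excedances_def)
next
  assume "i \<in> excedances m \<tau> \<and> i + 1 \<notin> excedances m \<tau>"
  moreover have "\<tau> (i + 1) \<noteq> \<tau> i" by (simp add: eq_iff)
  ultimately show "\<tau> (i + 1) < \<tau> i" using i by (auto simp: excedances_def)
qed

end

lemma centro_inv_321_iff:
  "\<pi> \<in> centro_inv_321 m \<longleftrightarrow> involution321 m \<pi> \<and> centrosymmetric m \<pi>"
proof -
  have "inv \<pi> = \<pi> \<longleftrightarrow> (\<forall>x. \<pi> (\<pi> x) = x)" if "\<pi> permutes {1..m}"
    using permutes_inverses(2)[OF that] inv_unique_comp[of \<pi> \<pi>] by (auto simp: fun_eq_iff)
  then show ?thesis
    unfolding centro_inv_321_def involution321_def by blast
qed

text \<open>By \<open>deficiency_iff_card_below\<close> the excedances determine the deficiencies from left to right.\<close>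

lemma involution321_deficiencies_below_eq:
  assumes \<tau>: "involution321 m \<tau>" and \<sigma>: "involution321 m \<sigma>"
    and exc: "{e \<in> excedances m \<tau>. e < k} = {e \<in> excedances m \<sigma>. e < k}"
  shows "{d \<in> deficiencies m \<tau>. d < k} = {d \<in> deficiencies m \<sigma>. d < k}"
  using exc
proof (induction k)
  case (Suc k)
  have below_Suc: "{x \<in> A. x < Suc k} = {x \<in> A. x < k} \<union> A \<inter> {k}" for A :: "nat set"
    by auto
  have exc_k: "{e \<in> excedances m \<tau>. e < k} = {e \<in> excedances m \<sigma>. e < k}"
    and exc_iff: "k \<in> excedances m \<tau> \<longleftrightarrow> k \<in> excedances m \<sigma>"
    using Suc.prems unfolding below_Suc by blast+
  have def_k: "{d \<in> deficiencies m \<tau>. d < k} = {d \<in> deficiencies m \<sigma>. d < k}"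
    by (rule Suc.IH[OF exc_k])
  have "k \<in> deficiencies m \<tau> \<longleftrightarrow> k \<in> deficiencies m \<sigma>"
  proof (cases "k \<in> {1..m} \<and> k \<notin> excedances m \<tau>")
    case True
    then show ?thesis
      using involution321.deficiency_iff_card_below[OF \<tau>, of k]
        involution321.deficiency_iff_card_below[OF \<sigma>, of k] exc_iff exc_k def_k
      by simp
  next
    case False
    then show ?thesis
      using exc_iff by (auto simp: excedances_def deficiencies_def)
  qed
  then show ?case
    unfolding below_Suc def_k by blast
qed simp

lemma involution321_eqI:
  assumes \<tau>: "involution321 m \<tau>" and \<sigma>: "involution321 m \<sigma>"
    and exc: "excedances m \<tau> = excedances m \<sigma>"
  shows "\<tau> = \<sigma>"
proof
  interpret \<tau>: involution321 m \<tau> by (rule \<tau>)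
  interpret \<sigma>: involution321 m \<sigma> by (rule \<sigma>)
  have below_Suc_m: "{d \<in> deficiencies m \<rho>. d < Suc m} = deficiencies m \<rho>" for \<rho>
    by (auto simp: deficiencies_def)
  have def: "deficiencies m \<tau> = deficiencies m \<sigma>"
    using involution321_deficiencies_below_eq[OF \<tau> \<sigma>, of "Suc m"] exc
    unfolding below_Suc_m by blast
  have on_exc: "\<tau> x = \<sigma> x" if "x \<in> excedances m \<tau>" for x
    using strict_mono_bij_betw_unique[OF _ \<tau>.bij_betw_excedances \<tau>.strict_mono_on_excedances
        \<sigma>.bij_betw_excedances[folded exc def] \<sigma>.strict_mono_on_excedances[folded exc] that]
    by (simp add: deficiencies_def)
  fix x
  show "\<tau> x = \<sigma> x"
  proof (cases "x \<in> excedances m \<tau> \<union> deficiencies m \<tau>")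
    case True
    then consider "x \<in> excedances m \<tau>" | "x \<in> deficiencies m \<tau>"
      by blast
    then show ?thesis
    proof cases
      case 2
      then have "\<tau> x \<in> excedances m \<tau>"
        by (auto simp: excedances_def deficiencies_def \<tau>.involutive)
      then have "\<sigma> (\<tau> x) = x"
        using on_exc[of "\<tau> x"] by (simp add: \<tau>.involutive)
      then show ?thesis
        using \<sigma>.involutive[of "\<tau> x"] by simp
    qed (rule on_exc)
  next
    case False
    have fixed: "\<rho> x = x" if "involution321 m \<rho>" "x \<notin> excedances m \<rho> \<union> deficiencies m \<rho>" for \<rho>
      using that involution321.fixed_outside[OF that(1), of x]
      by (cases "x \<in> {1..m}") (auto simp: excedances_def deficiencies_def)
    show ?thesis
      using fixed[OF \<tau> False] fixed[OF \<sigma>] False unfolding exc def by simp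
  qed
qed

definition reflect :: "nat \<Rightarrow> nat \<Rightarrow> nat" where
  "reflect m x = (if x \<in> {1..m} then m + 1 - x else x)"

lemma reflect_reflect [simp]: "reflect m (reflect m x) = x"
  by (cases "x \<in> {1..m}") (auto simp: reflect_def)

lemma reflect_bounds_iff [simp]:
  "Suc 0 \<le> reflect m x \<longleftrightarrow> Suc 0 \<le> x" "reflect m x \<le> m \<longleftrightarrow> x \<le> m"
  by (auto simp: reflect_def)

lemma reflect_in_range_iff: "reflect m x \<in> {1..m} \<longleftrightarrow> x \<in> {1..m}"
  by simp

lemma reflect_less_iff:
  "x \<in> {1..m} \<Longrightarrow> y \<in> {1..m} \<Longrightarrow> reflect m x < reflect m y \<longleftrightarrow> y < x"
  by (auto simp: reflect_def)

lemma permutes_reflect: "reflect m permutes {1..m}"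
proof (rule bij_imp_permutes)
  show "bij_betw (reflect m) {1..m} {1..m}"
    by (rule bij_betw_byWitness[where f' = "reflect m"]) auto
qed (auto simp: reflect_def)

lemma (in involution321) involution321_reflect_conj:
  "involution321 m (reflect m \<circ> \<tau> \<circ> reflect m)"
proof
  show "reflect m \<circ> \<tau> \<circ> reflect m permutes {1..m}"
    by (intro permutes_compose permutes permutes_reflect)
  show "(reflect m \<circ> \<tau> \<circ> reflect m) ((reflect m \<circ> \<tau> \<circ> reflect m) x) = x" for x
    by (simp add: involutive)
  show "avoids321 m (reflect m \<circ> \<tau> \<circ> reflect m)"
    unfolding avoids321_def
  proof clarify
    fix i j k
    assume ijk: "1 \<le> i" "i < j" "j < k" "k \<le> m"
      and desc: "(reflect m \<circ> \<tau> \<circ> reflect m) j < (reflect m \<circ> \<tau> \<circ> reflect m) i"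
        "(reflect m \<circ> \<tau> \<circ> reflect m) k < (reflect m \<circ> \<tau> \<circ> reflect m) j"
    have range: "reflect m x \<in> {1..m}" "\<tau> (reflect m x) \<in> {1..m}" if "x \<in> {1..m}" for x
      using that in_range reflect_in_range_iff by blast+
    have "i \<in> {1..m}" "j \<in> {1..m}" "k \<in> {1..m}"
      using ijk by auto
    note range = range[OF this(1)] range[OF this(2)] range[OF this(3)]
    have "\<tau> (reflect m i) < \<tau> (reflect m j)" "\<tau> (reflect m j) < \<tau> (reflect m k)"
      using desc reflect_less_iff range by auto
    moreover have "reflect m k < reflect m j" "reflect m j < reflect m i"
      using ijk reflect_less_iff \<open>i \<in> {1..m}\<close> \<open>j \<in> {1..m}\<close> \<open>k \<in> {1..m}\<close> by auto
    ultimately show False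
      using not_321[of "reflect m k" "reflect m j" "reflect m i"] range by auto
  qed
qed

lemma (in involution321) excedances_reflect_conj:
  "excedances m (reflect m \<circ> \<tau> \<circ> reflect m) = reflect m ` deficiencies m \<tau>"
proof -
  have key: "i \<in> excedances m (reflect m \<circ> \<tau> \<circ> reflect m) \<longleftrightarrow> reflect m i \<in> deficiencies m \<tau>"
    for i
  proof (cases "i \<in> {1..m}")
    case True
    then have "reflect m i \<in> {1..m}" "\<tau> (reflect m i) \<in> {1..m}"
      using in_range reflect_in_range_iff by blast+
    with reflect_less_iff[OF this] True show ?thesis
      by (simp add: excedances_def deficiencies_def)
  next
    case False
    then show ?thesis
      using reflect_in_range_iff by (auto simp: excedances_def deficiencies_def)
  qed
  show ?thesis
  proof (intro set_eqI iffI)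
    fix i assume "i \<in> excedances m (reflect m \<circ> \<tau> \<circ> reflect m)"
    then show "i \<in> reflect m ` deficiencies m \<tau>"
      using key image_eqI[of i "reflect m" "reflect m i"] by simp
  next
    fix i assume "i \<in> reflect m ` deficiencies m \<tau>"
    then obtain d where "d \<in> deficiencies m \<tau>" "i = reflect m d" by blast
    then show "i \<in> excedances m (reflect m \<circ> \<tau> \<circ> reflect m)"
      using key[of i] by simp
  qed
qed

lemma (in involution321) centrosymmetric_iff_reflect_conj:
  "centrosymmetric m \<tau> \<longleftrightarrow> reflect m \<circ> \<tau> \<circ> reflect m = \<tau>"
proof -
  have "\<tau> i + \<tau> (m + 1 - i) = m + 1 \<longleftrightarrow> reflect m (\<tau> (reflect m i)) = \<tau> i"
    if "i \<in> {1..m}" for i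
  proof -
    have le: "\<tau> (m + 1 - i) \<le> m"
      using that in_range[of "m + 1 - i"] by auto
    have "reflect m i = m + 1 - i" "reflect m (\<tau> (m + 1 - i)) = m + 1 - \<tau> (m + 1 - i)"
      using that in_range[of "m + 1 - i"] by (auto simp: reflect_def)
    then show ?thesis
      using le by arith
  qed
  moreover have "reflect m (\<tau> (reflect m i)) = \<tau> i" if "i \<notin> {1..m}" for i
  proof -
    have "reflect m i = i" using that by (auto simp: reflect_def)
    then show ?thesis using fixed_outside[OF that] by simp
  qed
  ultimately have "(\<forall>i\<in>{1..m}. \<tau> i + \<tau> (m + 1 - i) = m + 1) \<longleftrightarrow>
      (\<forall>i. reflect m (\<tau> (reflect m i)) = \<tau> i)"
    by blast
  then show ?thesis
    by (simp add: centrosymmetric_def fun_eq_iff)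
qed

text \<open>Centrosymmetry is invariance under reverse-complement, and by \<open>involution321_eqI\<close>
  that invariance only needs to be checked on excedances.\<close>

lemma (in involution321) centrosymmetric_iff_excedances:
  "centrosymmetric m \<tau> \<longleftrightarrow> reflect m ` deficiencies m \<tau> = excedances m \<tau>"
  unfolding centrosymmetric_iff_reflect_conj excedances_reflect_conj[symmetric]
  using involution321_eqI[OF involution321_reflect_conj involution321_axioms] by auto

lemma avoids321I_two_increasing:
  assumes "\<And>i j. 1 \<le> i \<Longrightarrow> i < j \<Longrightarrow> j \<le> m \<Longrightarrow> (i \<in> A \<longleftrightarrow> j \<in> A) \<Longrightarrow> \<tau> i < \<tau> j"
  shows "avoids321 m \<tau>"
  unfolding avoids321_def
proof clarify
  fix i j k assume ijk: "1 \<le> i" "i < j" "j < k" "k \<le> m" "\<tau> j < \<tau> i" "\<tau> k < \<tau> j"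
  consider "i \<in> A \<longleftrightarrow> j \<in> A" | "j \<in> A \<longleftrightarrow> k \<in> A" | "i \<in> A \<longleftrightarrow> k \<in> A"
    by blast
  then show False
  proof cases
    case 1
    then show False using assms[of i j] ijk by simp
  next
    case 2
    then show False using assms[of j k] ijk by simp
  next
    case 3
    then show False using assms[of i k] ijk by simp
  qed
qed

text \<open>\<open>E\<close> and \<open>D\<close> are the openers and closers of an arc diagram whose arcs \<open>f\<close> match them in
  increasing order. The ballot condition makes every arc point to the right, the balance
  condition forbids an arc to pass over a fixed point.\<close>

locale ballot_matching =
  fixes m :: nat and E D :: "nat set" and f :: "nat \<Rightarrow> nat"
  assumes E_sub: "E \<subseteq> {1..m}" and D_sub: "D \<subseteq> {1..m}" and disjoint: "E \<inter> D = {}"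
    and bij: "bij_betw f E D" and mono: "strict_mono_on E f"
    and ballot: "\<And>t. card {d \<in> D. d \<le> t} \<le> card {e \<in> E. e \<le> t}"
    and balanced: "\<And>x. x \<in> {1..m} \<Longrightarrow> x \<notin> E \<Longrightarrow> x \<notin> D \<Longrightarrow>
      card {d \<in> D. d \<le> x} = card {e \<in> E. e \<le> x}"
begin

definition matching_perm :: "nat \<Rightarrow> nat" where
  "matching_perm x = (if x \<in> E then f x else if x \<in> D then inv_into E f x else x)"

lemma finite_E: "finite E" and finite_D: "finite D"
  using E_sub D_sub by (auto intro: finite_subset)

lemma f_in_D: "e \<in> E \<Longrightarrow> f e \<in> D"
  using bij by (auto simp: bij_betw_def)

lemma inv_in_E: "d \<in> D \<Longrightarrow> inv_into E f d \<in> E"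
  using bij by (auto simp: bij_betw_def inv_into_into)

lemma f_inv [simp]: "d \<in> D \<Longrightarrow> f (inv_into E f d) = d"
  using bij by (simp add: bij_betw_inv_into_right)

lemma inv_f [simp]: "e \<in> E \<Longrightarrow> inv_into E f (f e) = e"
  using bij by (simp add: bij_betw_def)

lemma card_D_below_f:
  "e \<in> E \<Longrightarrow> card {d \<in> D. d < f e} = card {a \<in> E. a < e}"
  by (rule card_less_strict_mono_bij_betw[OF bij mono])

lemma less_f:
  assumes e: "e \<in> E"
  shows "e < f e"
proof (rule ccontr)
  assume "\<not> e < f e"
  moreover have "f e \<noteq> e" using f_in_D[OF e] e disjoint by auto
  ultimately have fe: "f e < e" by simp
  have "{d \<in> D. d \<le> f e} = insert (f e) {d \<in> D. d < f e}"
    using f_in_D[OF e] by auto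
  then have "card {d \<in> D. d \<le> f e} = Suc (card {a \<in> E. a < e})"
    using finite_D card_D_below_f[OF e] by simp
  moreover have "{a \<in> E. a \<le> f e} \<subseteq> {a \<in> E. a < e}"
    using fe by auto
  then have "card {a \<in> E. a \<le> f e} \<le> card {a \<in> E. a < e}"
    using finite_E by (simp add: card_mono)
  ultimately show False
    using ballot[of "f e"] by linarith
qed

lemma not_fixed_under_arc:
  assumes e: "e \<in> E" and x: "x \<in> {1..m}" "e < x" "x < f e"
  shows "x \<in> E \<union> D"
proof (rule ccontr)
  assume "x \<notin> E \<union> D"
  then have "card {d \<in> D. d \<le> x} = card {a \<in> E. a \<le> x}"
    using balanced[of x] x by simp
  moreover have "{d \<in> D. d \<le> x} \<subseteq> {d \<in> D. d < f e}"
    using x by auto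
  then have "card {d \<in> D. d \<le> x} \<le> card {a \<in> E. a < e}"
    unfolding card_D_below_f[OF e, symmetric] using finite_D by (simp add: card_mono)
  moreover have "{a \<in> E. a < e} \<subset> {a \<in> E. a \<le> x}"
  proof
    show "{a \<in> E. a < e} \<subseteq> {a \<in> E. a \<le> x}" using x by auto
    show "{a \<in> E. a < e} \<noteq> {a \<in> E. a \<le> x}"
      using e x by (metis (mono_tags, lifting) less_irrefl less_imp_le mem_Collect_eq)
  qed
  then have "card {a \<in> E. a < e} < card {a \<in> E. a \<le> x}"
    using finite_E by (simp add: psubset_card_mono)
  ultimately show False by linarith
qed

lemma matching_perm_involutive: "matching_perm (matching_perm x) = x"
  using f_in_D inv_in_E disjoint by (auto simp: matching_perm_def)

lemma matching_perm_in_range: "x \<in> {1..m} \<Longrightarrow> matching_perm x \<in> {1..m}"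
  unfolding matching_perm_def using f_in_D inv_in_E E_sub D_sub
  by (auto simp del: atLeastAtMost_iff)

lemma matching_perm_permutes: "matching_perm permutes {1..m}"
proof (rule bij_imp_permutes)
  have "matching_perm ` {1..m} \<subseteq> {1..m}"
    using matching_perm_in_range by blast
  then show "bij_betw matching_perm {1..m} {1..m}"
    by (rule_tac bij_betw_byWitness[where f' = matching_perm]) (simp_all add: matching_perm_involutive)
qed (use E_sub D_sub in \<open>auto simp: matching_perm_def\<close>)

lemma matching_perm_increasing_off_E:
  assumes x: "x \<in> {1..m}" "x \<notin> E" and y: "y \<notin> E" and "x < y"
  shows "matching_perm x < matching_perm y"
proof (cases "x \<in> D"; cases "y \<in> D")
  assume "x \<in> D" "y \<in> D"
  then show ?thesis
    using strict_mono_onD[OF strict_mono_on_inv_into[OF bij mono]] x y \<open>x < y\<close>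
    by (simp add: matching_perm_def)
next
  assume "x \<in> D" "y \<notin> D"
  then have "inv_into E f x < x"
    using less_f[OF inv_in_E] by fastforce
  then show ?thesis
    using \<open>x \<in> D\<close> \<open>y \<notin> D\<close> x y \<open>x < y\<close> by (simp add: matching_perm_def)
next
  assume "x \<notin> D" "y \<in> D"
  have "inv_into E f y \<noteq> x" using inv_in_E[OF \<open>y \<in> D\<close>] x by auto
  moreover have "\<not> inv_into E f y < x"
    using not_fixed_under_arc[OF inv_in_E[OF \<open>y \<in> D\<close>] x(1)] \<open>x < y\<close> \<open>y \<in> D\<close> x \<open>x \<notin> D\<close>
    by auto
  ultimately show ?thesis
    using \<open>x \<notin> D\<close> \<open>y \<in> D\<close> x y by (simp add: matching_perm_def)
next
  assume "x \<notin> D" "y \<notin> D"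
  then show ?thesis
    using x y \<open>x < y\<close> by (simp add: matching_perm_def)
qed

lemma involution321_matching_perm: "involution321 m matching_perm"
proof
  show "matching_perm permutes {1..m}" by (rule matching_perm_permutes)
  show "matching_perm (matching_perm x) = x" for x by (rule matching_perm_involutive)
  show "avoids321 m matching_perm"
  proof (rule avoids321I_two_increasing[where A = E])
    fix i j assume ij: "1 \<le> i" "i < j" "j \<le> m" "i \<in> E \<longleftrightarrow> j \<in> E"
    show "matching_perm i < matching_perm j"
    proof (cases "i \<in> E")
      case True
      then show ?thesis
        using ij strict_mono_onD[OF mono] by (simp add: matching_perm_def)
    next
      case False
      then show ?thesis
        using ij matching_perm_increasing_off_E[of i j] by simp
    qed
  qed
qed

lemma excedances_matching_perm: "excedances m matching_perm = E"
  and deficiencies_matching_perm: "deficiencies m matching_perm = D"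
proof -
  have "i < matching_perm i \<longleftrightarrow> i \<in> E" "matching_perm i < i \<longleftrightarrow> i \<in> D" for i
    using less_f[of i] less_f[OF inv_in_E[of i]] disjoint
    by (cases "i \<in> E"; cases "i \<in> D"; auto simp: matching_perm_def)+
  then show "excedances m matching_perm = E" "deficiencies m matching_perm = D"
    using E_sub D_sub by (auto simp: excedances_def deficiencies_def)
qed

end

lemma ex_involution321_with_excedances:
  assumes "E \<subseteq> {1..m}" "D \<subseteq> {1..m}" "E \<inter> D = {}" "card E = card D"
    and "\<And>t. card {d \<in> D. d \<le> t} \<le> card {e \<in> E. e \<le> t}"
    and "\<And>x. x \<in> {1..m} \<Longrightarrow> x \<notin> E \<Longrightarrow> x \<notin> D \<Longrightarrow>
      card {d \<in> D. d \<le> x} = card {e \<in> E. e \<le> x}"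
  obtains \<tau> where "involution321 m \<tau>" "excedances m \<tau> = E" "deficiencies m \<tau> = D"
proof -
  have "finite E" "finite D" using assms(1,2) by (auto intro: finite_subset)
  then obtain f where "bij_betw f E D" "strict_mono_on E f"
    using ex_strict_mono_bij_betw assms(4) by blast
  then interpret ballot_matching m E D f
    using assms by unfold_locales auto
  show thesis
    using that involution321_matching_perm excedances_matching_perm deficiencies_matching_perm .
qed

lemma card_le_Suc:
  fixes A :: "nat set"
  assumes "finite A"
  shows "card {x \<in> A. x \<le> Suc t} = card {x \<in> A. x \<le> t} + (if Suc t \<in> A then 1 else 0)"
proof -
  have "{x \<in> A. x \<le> Suc t} = {x \<in> A. x \<le> t} \<union> A \<inter> {Suc t}"
    by (auto simp: le_Suc_eq)
  then show ?thesis
    using assms by (simp add: card_Un_disjoint)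
qed

lemma card_greater_eq_diff:
  fixes A :: "nat set"
  assumes "finite A"
  shows "card {x \<in> A. u < x} = card A - card {x \<in> A. x \<le> u}"
proof -
  have "A = {x \<in> A. u < x} \<union> {x \<in> A. x \<le> u}" "{x \<in> A. u < x} \<inter> {x \<in> A. x \<le> u} = {}"
    by auto
  then have "card A = card {x \<in> A. u < x} + card {x \<in> A. x \<le> u}"
    using assms by (metis (no_types, lifting) card_Un_disjoint finite_Un)
  then show ?thesis by simp
qed

text \<open>The lattice path with an up-step at each element of \<open>S\<close> and a down-step elsewhere;
  the truncated subtraction keeps it from going below ground level. A down-step from
  above ground closes an arc.\<close>

fun height :: "nat set \<Rightarrow> nat \<Rightarrow> nat" where
  "height S 0 = 0"
| "height S (Suc i) = (if Suc i \<in> S then Suc (height S i) else height S i - 1)"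

definition closers :: "nat \<Rightarrow> nat set \<Rightarrow> nat set" where
  "closers n S = {i \<in> {1..n}. i \<notin> S \<and> 0 < height S (i - 1)}"

lemma closers_subset: "closers n S \<subseteq> {1..n}"
  by (auto simp: closers_def)

lemma finite_closers: "finite (closers n S)"
  by (simp add: closers_def)

lemma card_le_eq_closers_height:
  assumes S: "S \<subseteq> {1..n}" and "t \<le> n"
  shows "card {s \<in> S. s \<le> t} = card {d \<in> closers n S. d \<le> t} + height S t"
  using \<open>t \<le> n\<close>
proof (induction t)
  case 0
  have "{s \<in> S. s \<le> 0} = {}" "{d \<in> closers n S. d \<le> 0} = {}"
    using S by (auto simp: closers_def)
  then show ?case by (simp only: card.empty height.simps(1) add_0)
next
  case (Suc t)
  have "finite S"
    using S by (auto intro: finite_subset)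
  moreover have "Suc t \<in> closers n S \<longleftrightarrow> Suc t \<notin> S \<and> 0 < height S t"
    using Suc.prems by (auto simp: closers_def)
  ultimately show ?case
    using Suc card_le_Suc[of S t] card_le_Suc[OF finite_closers[of n S], of t] by auto
qed

lemma reflect_double_eq: "x \<in> {1..n} \<Longrightarrow> reflect (2 * n) x = 2 * n + 1 - x"
  by (simp add: reflect_def)

lemma card_le_reflect_image:
  assumes "B \<subseteq> {1..n}"
  shows "card {y \<in> reflect (2 * n) ` B. y \<le> t} = card {x \<in> B. 2 * n - t < x}"
proof -
  have "{y \<in> reflect (2 * n) ` B. y \<le> t} = reflect (2 * n) ` {x \<in> B. 2 * n - t < x}"
    using assms by (force simp: reflect_double_eq)
  moreover have "inj_on (reflect (2 * n)) {x \<in> B. 2 * n - t < x}"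
    by (metis (no_types, lifting) inj_onI reflect_reflect)
  ultimately show ?thesis
    by (simp add: card_image)
qed

lemma card_le_Un_reflect_image:
  assumes "A \<subseteq> {1..n}" "B \<subseteq> {1..n}"
  shows "card {x \<in> A \<union> reflect (2 * n) ` B. x \<le> t} =
    card {x \<in> A. x \<le> t} + card {x \<in> B. 2 * n - t < x}"
proof -
  have "A \<inter> reflect (2 * n) ` B = {}"
    using assms by (force simp: reflect_double_eq)
  moreover have "finite A" "finite B"
    using assms by (auto intro: finite_subset)
  ultimately have "card {x \<in> A \<union> reflect (2 * n) ` B. x \<le> t} =
      card {x \<in> A. x \<le> t} + card {x \<in> reflect (2 * n) ` B. x \<le> t}"
    by (subst card_Un_disjoint[symmetric]) (auto intro: arg_cong[where f = card])
  then show ?thesis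
    using card_le_reflect_image[OF assms(2)] by simp
qed

lemma card_le_closers_balance:
  assumes S: "S \<subseteq> {1..n}"
  shows "card {d \<in> closers n S \<union> reflect (2 * n) ` S. d \<le> t}
      + height S (if t \<le> n then t else 2 * n - t)
    = card {e \<in> S \<union> reflect (2 * n) ` closers n S. e \<le> t}"
proof -
  let ?C = "closers n S"
  have fin: "finite S" "finite ?C"
    using S finite_closers by (auto intro: finite_subset)
  note split = card_le_Un_reflect_image[OF closers_subset[of n S] S, where t = t]
    card_le_Un_reflect_image[OF S closers_subset[of n S], where t = t]
  show ?thesis
  proof (cases "t \<le> n")
    case True
    then have "{x \<in> S. 2 * n - t < x} = {}" "{x \<in> ?C. 2 * n - t < x} = {}"
      using S closers_subset[of n S] by fastforce+
    then have "card {x \<in> S. 2 * n - t < x} = 0" "card {x \<in> ?C. 2 * n - t < x} = 0"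
      by (simp_all only: card.empty)
    then show ?thesis
      using True split card_le_eq_closers_height[OF S True] by simp
  next
    case False
    define u where "u = 2 * n - t"
    have "u \<le> n" using False by (simp add: u_def)
    have all: "{x \<in> S. x \<le> t} = S" "{x \<in> ?C. x \<le> t} = ?C"
      using S closers_subset[of n S] False by fastforce+
    have "card {x \<in> S. x \<le> u} \<le> card S" "card {x \<in> ?C. x \<le> u} \<le> card ?C"
      using fin by (auto intro: card_mono)
    then show ?thesis
      using False split card_greater_eq_diff[OF fin(1), of u] card_greater_eq_diff[OF fin(2), of u]
        card_le_eq_closers_height[OF S \<open>u \<le> n\<close>]
      unfolding all u_def[symmetric] by simp
  qed
qed

lemma excedances_le: "n \<le> m \<Longrightarrow> excedances n \<tau> = {e \<in> excedances m \<tau>. e \<le> n}"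
  by (auto simp: excedances_def)

lemma reflect_image_subset:
  assumes "A \<subseteq> {1..n}"
  shows "reflect (2 * n) ` A \<subseteq> {n + 1..2 * n}"
proof
  fix y assume "y \<in> reflect (2 * n) ` A"
  then obtain x where "x \<in> {1..n}" "y = 2 * n + 1 - x"
    using assms reflect_double_eq by blast
  then show "y \<in> {n + 1..2 * n}" by auto
qed

lemma inj_reflect: "inj (reflect m)"
  by (metis injI reflect_reflect)

lemma height_pred_eq_0:
  assumes "y \<in> {1..n}" "y \<notin> S" "y \<notin> closers n S"
  shows "height S (y - 1) = 0"
  using assms by (simp add: closers_def)

lemma ex_centro_inv_321_excedances:
  assumes S: "S \<subseteq> {1..n}"
  obtains \<pi> where "\<pi> \<in> centro_inv_321 (2 * n)" "excedances n \<pi> = S"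
proof -
  let ?r = "reflect (2 * n)" and ?C = "closers n S"
  \<comment> \<open>the first half of the arc diagram is read off the path, the second half is its mirror image\<close>
  define E where "E = S \<union> ?r ` ?C"
  define D where "D = ?C \<union> ?r ` S"
  have C: "?C \<subseteq> {1..n}" "S \<inter> ?C = {}"
    by (auto simp: closers_def)
  have up: "?r ` S \<subseteq> {n + 1..2 * n}" "?r ` ?C \<subseteq> {n + 1..2 * n}"
    using reflect_image_subset[OF S] reflect_image_subset[OF C(1)] .
  have halves: "{1..n} \<subseteq> {1..2 * n}" "{n + 1..2 * n} \<subseteq> {1..2 * n}" "{1..n} \<inter> {n + 1..2 * n} = {}"
    by auto
  have E_sub: "E \<subseteq> {1..2 * n}" and D_sub: "D \<subseteq> {1..2 * n}"
    unfolding E_def D_def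
    by (intro Un_least subset_trans[OF _ halves(1)] subset_trans[OF _ halves(2)] S C(1) up)+
  have reflect_E: "?r ` E = D"
    by (simp add: E_def D_def image_Un image_image Un_commute)
  have "?r ` ?C \<inter> ?r ` S = {}"
    using C(2) inj_reflect by (simp add: image_Int[symmetric] Int_commute)
  moreover have "A \<inter> B = {}" if "A \<subseteq> {1..n}" "B \<subseteq> {n + 1..2 * n}" for A B
    using that halves(3) by blast
  ultimately have disjoint: "E \<inter> D = {}"
    unfolding E_def D_def using S C up by (simp add: Int_Un_distrib Int_Un_distrib2 Int_commute)
  have card_eq: "card E = card D"
    unfolding reflect_E[symmetric] by (rule card_image[symmetric]) (rule inj_on_subset[OF inj_reflect], simp)
  have balance: "card {d \<in> D. d \<le> t} + height S (if t \<le> n then t else 2 * n - t) = card {e \<in> E. e \<le> t}"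
    for t
    unfolding D_def E_def by (rule card_le_closers_balance[OF S])
  have balanced: "card {d \<in> D. d \<le> x} = card {e \<in> E. e \<le> x}"
    if x: "x \<in> {1..2 * n}" "x \<notin> E" "x \<notin> D" for x
  proof -
    have "height S (if x \<le> n then x else 2 * n - x) = 0"
    proof (cases "x \<le> n")
      case True
      with x have "x \<in> {1..n}" "x \<notin> S" "x \<notin> ?C"
        by (auto simp: E_def D_def)
      then have "height S (x - 1) = 0" "x = Suc (x - 1)"
        using height_pred_eq_0 by auto
      then show ?thesis
        using True height.simps(2)[of S "x - 1"] \<open>x \<notin> S\<close> by simp
    next
      case False
      define y where "y = 2 * n + 1 - x"
      have "y \<in> {1..n}"
        using x False by (auto simp: y_def)
      moreover have "x = ?r y" "2 * n - x = y - 1"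
        using x False reflect_double_eq[OF \<open>y \<in> {1..n}\<close>] by (auto simp: y_def)
      ultimately have y: "y \<in> {1..n}" "x = ?r y" "2 * n - x = y - 1"
        by blast+
      have "y \<notin> S" "y \<notin> ?C"
        using x y(2) by (auto simp: E_def D_def)
      with y show ?thesis
        using False height_pred_eq_0 by simp
    qed
    then show ?thesis
      using balance[of x] by simp
  qed
  obtain \<tau> where \<tau>: "involution321 (2 * n) \<tau>" "excedances (2 * n) \<tau> = E"
    "deficiencies (2 * n) \<tau> = D"
  proof (rule ex_involution321_with_excedances[OF E_sub D_sub disjoint card_eq])
    show "card {d \<in> D. d \<le> t} \<le> card {e \<in> E. e \<le> t}" for t
      using balance[of t] by linarith
  qed (use balanced that in blast)+
  have "centrosymmetric (2 * n) \<tau>"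
    using involution321.centrosymmetric_iff_excedances[OF \<tau>(1)] \<tau>(2,3)
    by (simp add: reflect_E[symmetric] image_image)
  then have "\<tau> \<in> centro_inv_321 (2 * n)"
    using centro_inv_321_iff \<tau>(1) by blast
  moreover have "{e \<in> E. e \<le> n} = S"
    unfolding E_def using S up(2) by auto
  then have "excedances n \<tau> = S"
    using excedances_le[of n "2 * n" \<tau>] \<tau>(2) by simp
  ultimately show thesis by (rule that)
qed

lemma excedances_centrosymmetric_halves:
  assumes \<tau>: "involution321 (2 * n) \<tau>" and "centrosymmetric (2 * n) \<tau>"
  shows "excedances (2 * n) \<tau> =
    {e \<in> excedances (2 * n) \<tau>. e \<le> n} \<union> reflect (2 * n) ` {d \<in> deficiencies (2 * n) \<tau>. d \<le> n}"
proof -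
  have reflect: "reflect (2 * n) ` deficiencies (2 * n) \<tau> = excedances (2 * n) \<tau>"
    using involution321.centrosymmetric_iff_excedances[OF \<tau>] assms(2) by simp
  have "e \<in> reflect (2 * n) ` {d \<in> deficiencies (2 * n) \<tau>. d \<le> n}"
    if "e \<in> excedances (2 * n) \<tau>" "\<not> e \<le> n" for e
  proof -
    have "reflect (2 * n) e \<in> deficiencies (2 * n) \<tau>"
      using that reflect reflect_reflect by (metis imageE)
    moreover have "reflect (2 * n) e \<le> n"
      using that by (auto simp: excedances_def reflect_def)
    ultimately show ?thesis
      using image_eqI[of e "reflect (2 * n)" "reflect (2 * n) e"] by simp
  qed
  then show ?thesis
    using reflect by blast
qed

lemma inj_on_excedances_centro_inv_321: "inj_on (excedances n) (centro_inv_321 (2 * n))"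
proof (rule inj_onI)
  fix \<pi> \<sigma> assume "\<pi> \<in> centro_inv_321 (2 * n)" "\<sigma> \<in> centro_inv_321 (2 * n)"
    and eq: "excedances n \<pi> = excedances n \<sigma>"
  then have \<pi>: "involution321 (2 * n) \<pi>" "centrosymmetric (2 * n) \<pi>"
    and \<sigma>: "involution321 (2 * n) \<sigma>" "centrosymmetric (2 * n) \<sigma>"
    by (simp_all add: centro_inv_321_iff)
  have low_exc: "{e \<in> excedances (2 * n) \<pi>. e \<le> n} = {e \<in> excedances (2 * n) \<sigma>. e \<le> n}"
    using eq excedances_le[of n "2 * n"] by simp
  then have low_def: "{d \<in> deficiencies (2 * n) \<pi>. d \<le> n} = {d \<in> deficiencies (2 * n) \<sigma>. d \<le> n}"
    using involution321_deficiencies_below_eq[OF \<pi>(1) \<sigma>(1), of "Suc n"]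
    unfolding less_Suc_eq_le by blast
  have "excedances (2 * n) \<pi> = excedances (2 * n) \<sigma>"
    using excedances_centrosymmetric_halves[OF \<pi>] excedances_centrosymmetric_halves[OF \<sigma>]
    unfolding low_exc low_def by simp
  then show "\<pi> = \<sigma>"
    by (rule involution321_eqI[OF \<pi>(1) \<sigma>(1)])
qed

lemma bij_betw_excedances_centro_inv_321:
  "bij_betw (excedances n) (centro_inv_321 (2 * n)) (Pow {1..n})"
proof -
  have "excedances n ` centro_inv_321 (2 * n) = Pow {1..n}"
  proof
    show "excedances n ` centro_inv_321 (2 * n) \<subseteq> Pow {1..n}"
      by (auto simp: excedances_def)
    show "Pow {1..n} \<subseteq> excedances n ` centro_inv_321 (2 * n)"
    proof
      fix S assume "S \<in> Pow {1..n}"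
      then obtain \<pi> where "\<pi> \<in> centro_inv_321 (2 * n)" "excedances n \<pi> = S"
        using ex_centro_inv_321_excedances by blast
      then show "S \<in> excedances n ` centro_inv_321 (2 * n)" by blast
    qed
  qed
  then show ?thesis
    using inj_on_excedances_centro_inv_321 by (simp add: bij_betw_def)
qed

definition runs :: "nat set \<Rightarrow> nat" where
  "runs S = card {i \<in> S. Suc i \<notin> S}"

lemma des_plus_centro_inv_321:
  assumes "\<pi> \<in> centro_inv_321 (2 * n)"
  shows "des_plus (2 * n) \<pi> = runs (excedances n \<pi>)"
proof -
  have \<pi>: "involution321 (2 * n) \<pi>" "centrosymmetric (2 * n) \<pi>"
    using assms by (simp_all add: centro_inv_321_iff)
  have "i \<in> Des (2 * n) \<pi> \<longleftrightarrow> i \<in> excedances n \<pi> \<and> Suc i \<notin> excedances n \<pi>"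
    if i: "i \<in> {1..n}" for i
  proof -
    have "i \<in> Des (2 * n) \<pi> \<longleftrightarrow> i \<in> excedances (2 * n) \<pi> \<and> i + 1 \<notin> excedances (2 * n) \<pi>"
      using involution321.descent_iff_excedances[OF \<pi>(1), of i] i by (auto simp: Des_def)
    moreover have "Suc n \<notin> excedances (2 * n) \<pi>" if "n \<in> excedances (2 * n) \<pi>"
    proof -
      have "n \<in> {1..2 * n}" using i by auto
      then have "\<pi> n + \<pi> (2 * n + 1 - n) = 2 * n + 1"
        using \<pi>(2) unfolding centrosymmetric_def by blast
      then have "\<pi> n + \<pi> (Suc n) = 2 * n + 1"
        by (simp add: Suc_diff_le)
      then show ?thesis using that by (auto simp: excedances_def)
    qed
    ultimately show ?thesis
      using i by (cases "i = n") (auto simp: excedances_def)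
  qed
  then have "Des (2 * n) \<pi> \<inter> {1..2 * n div 2} = {i \<in> excedances n \<pi>. Suc i \<notin> excedances n \<pi>}"
    by (auto simp: excedances_def)
  then show ?thesis
    by (simp add: des_plus_def runs_def)
qed

lemma sum_choose_even_power:
  fixes s :: "'a::field_char_0"
  shows "(\<Sum>k\<le>N. of_nat (N choose (2 * k)) * (s\<^sup>2) ^ k) = ((1 + s) ^ N + (1 - s) ^ N) / 2"
proof -
  define g where "g k = of_nat (N choose k) * (s ^ k + (- s) ^ k)" for k
  have "(1 + s) ^ N + (1 - s) ^ N = (\<Sum>k\<le>N. g k)"
    using binomial_ring[of s 1 N] binomial_ring[of "- s" 1 N]
    by (simp add: g_def add.commute sum.distrib distrib_left)
  also have "\<dots> = (\<Sum>k\<le>Suc (2 * N). g k)"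
    by (rule sum.mono_neutral_left) (auto simp: g_def)
  also have "\<dots> = (\<Sum>k\<le>N. g (2 * k) + g (Suc (2 * k)))"
    by (rule sum.in_pairs_0)
  also have "\<dots> = 2 * (\<Sum>k\<le>N. of_nat (N choose (2 * k)) * (s\<^sup>2) ^ k)"
    by (simp add: g_def power_mult mult.left_commute sum_distrib_left)
  finally show ?thesis
    by simp
qed

lemma runs_insert_Suc:
  assumes "S \<subseteq> {1..n}"
  shows "runs (insert (Suc n) S) = runs S + (if n \<in> S then 0 else 1)"
proof -
  have "Suc n \<notin> S" "Suc (Suc n) \<notin> S" "finite S"
    using assms by (auto intro: finite_subset)
  then have "{i \<in> insert (Suc n) S. Suc i \<notin> insert (Suc n) S} =
      insert (Suc n) ({i \<in> S. Suc i \<notin> S} - {n})"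
    by auto
  moreover have "n \<in> {i \<in> S. Suc i \<notin> S} \<longleftrightarrow> n \<in> S"
    using \<open>Suc n \<notin> S\<close> by simp
  moreover have "n \<in> S \<Longrightarrow> card {i \<in> S. Suc i \<notin> S} > 0"
    using \<open>Suc n \<notin> S\<close> \<open>finite S\<close> by (auto simp: card_gt_0_iff)
  ultimately show ?thesis
    using \<open>Suc n \<notin> S\<close> \<open>finite S\<close> by (simp add: runs_def card_Diff_singleton_if)
qed

text \<open>The two sums \<open>X\<^sub>n, Y\<^sub>n\<close> satisfy \<open>X\<^sub>n\<^sub>+\<^sub>1 = X\<^sub>n + Y\<^sub>n\<close> and \<open>Y\<^sub>n\<^sub>+\<^sub>1 = s\<^sup>2 X\<^sub>n + Y\<^sub>n\<close>.\<close>

lemma sum_runs_last_notin_in: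
  fixes s :: "'a::field_char_0"
  shows "(\<Sum>S\<in>{S \<in> Pow {1..n}. n \<notin> S}. (s\<^sup>2) ^ runs S) = ((1 + s) ^ n + (1 - s) ^ n) / 2
    \<and> (\<Sum>S\<in>{S \<in> Pow {1..n}. n \<in> S}. (s\<^sup>2) ^ runs S) = s * ((1 + s) ^ n - (1 - s) ^ n) / 2"
proof (induction n)
  case 0
  have "{S \<in> Pow {1..0::nat}. 0 \<notin> S} = {{}}" "{S \<in> Pow {1..0::nat}. 0 \<in> S} = {}"
    by auto
  then show ?case by (simp add: runs_def)
next
  case (Suc n)
  define X where "X = (\<Sum>S\<in>{S \<in> Pow {1..n}. n \<notin> S}. (s\<^sup>2) ^ runs S)"
  define Y where "Y = (\<Sum>S\<in>{S \<in> Pow {1..n}. n \<in> S}. (s\<^sup>2) ^ runs S)"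
  have Pow_Suc: "Pow {1..Suc n} = Pow {1..n} \<union> insert (Suc n) ` Pow {1..n}"
    by (simp add: atLeastAtMostSuc_conv Pow_insert)
  have notin_last: "{S \<in> Pow {1..Suc n}. Suc n \<notin> S} = Pow {1..n}"
    and in_last: "{S \<in> Pow {1..Suc n}. Suc n \<in> S} = insert (Suc n) ` Pow {1..n}"
    unfolding Pow_Suc by auto
  have split: "(\<Sum>S\<in>Pow {1..n}. h S) =
      (\<Sum>S\<in>{S \<in> Pow {1..n}. n \<in> S}. h S) + (\<Sum>S\<in>{S \<in> Pow {1..n}. n \<notin> S}. h S)"
    for h :: "nat set \<Rightarrow> 'a"
    using sum.Int_Diff[of "Pow {1..n}" h "{S. n \<in> S}"] by (simp add: Int_def set_diff_eq)
  have "inj_on (insert (Suc n)) (Pow {1..n})"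
    by (rule inj_onI) (metis PowD atLeastAtMost_iff insert_ident not_less_eq_eq order_refl subsetD)
  then have "(\<Sum>S\<in>{S \<in> Pow {1..Suc n}. Suc n \<in> S}. (s\<^sup>2) ^ runs S)
      = (\<Sum>S\<in>Pow {1..n}. (s\<^sup>2) ^ runs (insert (Suc n) S))"
    unfolding in_last by (simp add: sum.reindex)
  also have "\<dots> = (\<Sum>S\<in>Pow {1..n}. (s\<^sup>2) ^ runs S * (if n \<in> S then 1 else s\<^sup>2))"
    by (rule sum.cong) (simp_all add: runs_insert_Suc)
  also have "\<dots> = Y + s\<^sup>2 * X"
    unfolding split X_def Y_def by (simp add: sum_distrib_left mult.commute)
  finally have in_sum: "(\<Sum>S\<in>{S \<in> Pow {1..Suc n}. Suc n \<in> S}. (s\<^sup>2) ^ runs S) = Y + s\<^sup>2 * X" .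
  have notin_sum: "(\<Sum>S\<in>{S \<in> Pow {1..Suc n}. Suc n \<notin> S}. (s\<^sup>2) ^ runs S) = Y + X"
    unfolding notin_last split X_def Y_def ..
  have IH: "X = ((1 + s) ^ n + (1 - s) ^ n) / 2" "Y = s * ((1 + s) ^ n - (1 - s) ^ n) / 2"
    using Suc.IH unfolding X_def Y_def by blast+
  show ?case
    unfolding in_sum notin_sum IH by (simp add: field_simps power2_eq_square)
qed

lemma sum_runs_Pow:
  fixes s :: "'a::field_char_0"
  shows "(\<Sum>S\<in>Pow {1..n}. (s\<^sup>2) ^ runs S) = ((1 + s) ^ (n + 1) + (1 - s) ^ (n + 1)) / 2"
proof -
  have "Pow {1..n} = {S \<in> Pow {1..Suc n}. Suc n \<notin> S}"
    by (auto simp: atLeastAtMostSuc_conv)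
  then show ?thesis
    using sum_runs_last_notin_in[where n = "Suc n" and s = s] by simp
qed

theorem mainTheorem1:
  fixes n :: nat and q :: complex
  shows "(\<Sum>\<pi>\<in>centro_inv_321 (2 * n). q ^ des_plus (2 * n) \<pi>)
           = (\<Sum>k\<le>n + 1. of_nat ((n + 1) choose (2 * k)) * q ^ k)
       \<and> (\<Sum>k\<le>n + 1. of_nat ((n + 1) choose (2 * k)) * q ^ k)
           = ((1 + csqrt q) ^ (n + 1) + (1 - csqrt q) ^ (n + 1)) / 2"
proof -
  have "(\<Sum>\<pi>\<in>centro_inv_321 (2 * n). q ^ des_plus (2 * n) \<pi>)
      = (\<Sum>\<pi>\<in>centro_inv_321 (2 * n). q ^ runs (excedances n \<pi>))"
    by (rule sum.cong) (simp_all add: des_plus_centro_inv_321)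
  also have "\<dots> = (\<Sum>S\<in>Pow {1..n}. q ^ runs S)"
    by (rule sum.reindex_bij_betw[OF bij_betw_excedances_centro_inv_321])
  also have "\<dots> = ((1 + csqrt q) ^ (n + 1) + (1 - csqrt q) ^ (n + 1)) / 2"
    using sum_runs_Pow[where n = n and s = "csqrt q"] unfolding power2_csqrt .
  finally have lhs: "(\<Sum>\<pi>\<in>centro_inv_321 (2 * n). q ^ des_plus (2 * n) \<pi>)
      = ((1 + csqrt q) ^ (n + 1) + (1 - csqrt q) ^ (n + 1)) / 2" .
  have rhs: "(\<Sum>k\<le>n + 1. of_nat ((n + 1) choose (2 * k)) * q ^ k)
      = ((1 + csqrt q) ^ (n + 1) + (1 - csqrt q) ^ (n + 1)) / 2"
    using sum_choose_even_power[where N = "n + 1" and s = "csqrt q"] unfolding power2_csqrt .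
  show ?thesis
    unfolding lhs rhs by simp
qed

end
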